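(* Let $(A,\circ)$ be a Novikov algebra, $\{a,b\}=a\circ b+b\circ a$ and $[a,b]=a\circ b-b\circ a$. Then for all $a,b,c,d\in A$, $$\{[c,a],[b,d]\}=\{d\circ c,a\circ b\}+\{c\circ d,b\circ a\}-\{b\circ c,a\circ d\}-\{c\circ b,d\circ a\}.$$
   Context: A (right) Novikov algebra is an algebra $(A,\circ)$ satisfying $a\circ(b\circ c)-(a\circ b)\circ c=a\circ(c\circ b)-(a\circ c)\circ b$ and $a\circ(b\circ c)=b\circ(a\circ c)$ for all $a,b,c$. *)

theory Defs
  imports Main "HOL.Vector_Spaces"
begin

definition bilinear_product ::
  "('k::field \<Rightarrow> 'a::ab_group_add \<Rightarrow> 'a) \<Rightarrow> ('a \<Rightarrow> 'a \<Rightarrow> 'a) \<Rightarrow> bool" where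
  "bilinear_product scale m \<longleftrightarrow>
     (\<forall>x y z. m (x + y) z = m x z + m y z) \<and>
     (\<forall>x y z. m x (y + z) = m x y + m x z) \<and>
     (\<forall>c x y. m (scale c x) y = scale c (m x y)) \<and>
     (\<forall>c x y. m x (scale c y) = scale c (m x y))"

definition novikov_algebra ::
  "('k::field \<Rightarrow> 'a::ab_group_add \<Rightarrow> 'a) \<Rightarrow> ('a \<Rightarrow> 'a \<Rightarrow> 'a) \<Rightarrow> bool" where
  "novikov_algebra scale m \<longleftrightarrow>
     vector_space scale \<and> bilinear_product scale m \<and>
     (\<forall>a b c. m a (m b c) - m (m a b) c = m a (m c b) - m (m a c) b) \<and>
     (\<forall>a b c. m a (m b c) = m b (m a c))"

definition anticomm :: "('a \<Rightarrow> 'a \<Rightarrow> 'a::ab_group_add) \<Rightarrow> 'a \<Rightarrow> 'a \<Rightarrow> 'a" where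
  "anticomm m a b = m a b + m b a"

definition comm :: "('a \<Rightarrow> 'a \<Rightarrow> 'a::ab_group_add) \<Rightarrow> 'a \<Rightarrow> 'a \<Rightarrow> 'a" where
  "comm m a b = m a b - m b a"

end

theory Submission
  imports Defs
begin

text \<open>Write \<open>p = [c,a]\<close> and \<open>q = [b,d]\<close>. By left commutativity
\<open>{x \<circ> y, z \<circ> w} = z \<circ> ((x \<circ> y) \<circ> w) + x \<circ> ((z \<circ> w) \<circ> y)\<close>, so after grouping the
eight terms of the right-hand side by their outer left factor, each group is of the form
\<open>(x \<circ> y) \<circ> z - (z \<circ> y) \<circ> x = {[x,z],y}\<close>, and the right-hand side becomes
\<open>c \<circ> {q,a} - a \<circ> {q,c} + b \<circ> {p,d} - d \<circ> {p,b}\<close>.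
Left commutativity again gives \<open>x \<circ> {q,y} - y \<circ> {q,x} = q \<circ> [x,y]\<close>, so this is
\<open>q \<circ> p + p \<circ> q = {p,q}\<close>.\<close>

lemma comm_swap: "comm m y x = - comm m x y"
  by (simp add: comm_def)

locale novikov =
  fixes m :: "'a::ab_group_add \<Rightarrow> 'a \<Rightarrow> 'a"  (infixl \<open>\<cdot>\<close> 70)
  assumes add_left: "(x + y) \<cdot> z = x \<cdot> z + y \<cdot> z"
    and add_right: "x \<cdot> (y + z) = x \<cdot> y + x \<cdot> z"
    and right_symmetric: "x \<cdot> (y \<cdot> z) - (x \<cdot> y) \<cdot> z = x \<cdot> (z \<cdot> y) - (x \<cdot> z) \<cdot> y"
    and left_commutative: "x \<cdot> (y \<cdot> z) = y \<cdot> (x \<cdot> z)"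
begin

lemma additive_left: "additive (\<lambda>x. x \<cdot> z)"
  by unfold_locales (rule add_left)

lemma additive_right: "additive (\<lambda>y. x \<cdot> y)"
  by unfold_locales (rule add_right)

lemma diff_left: "(x - y) \<cdot> z = x \<cdot> z - y \<cdot> z"
  using additive.diff [OF additive_left] .

lemma diff_right: "x \<cdot> (y - z) = x \<cdot> y - x \<cdot> z"
  using additive.diff [OF additive_right] .

lemma minus_right: "x \<cdot> (- y) = - (x \<cdot> y)"
  using additive.minus [OF additive_right] .

lemma anticomm_minus_left: "anticomm m (- x) y = - anticomm m x y"
  using additive.minus [OF additive_left] by (simp add: anticomm_def minus_right)

lemma anticomm_comm_left: "anticomm m (comm m x y) z = (x \<cdot> z) \<cdot> y - (y \<cdot> z) \<cdot> x"
proof -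
  have "(x \<cdot> y) \<cdot> z = x \<cdot> (y \<cdot> z) - x \<cdot> (z \<cdot> y) + (x \<cdot> z) \<cdot> y"
    and "(y \<cdot> x) \<cdot> z = y \<cdot> (x \<cdot> z) - y \<cdot> (z \<cdot> x) + (y \<cdot> z) \<cdot> x"
    using right_symmetric [of x y z] right_symmetric [of y x z] by (simp_all add: algebra_simps)
  moreover have "z \<cdot> (x \<cdot> y) = x \<cdot> (z \<cdot> y)" "z \<cdot> (y \<cdot> x) = y \<cdot> (z \<cdot> x)"
    and "y \<cdot> (x \<cdot> z) = x \<cdot> (y \<cdot> z)"
    by (rule left_commutative)+
  ultimately show ?thesis
    by (simp add: anticomm_def comm_def diff_left diff_right)
qed

lemma anticomm_mult_mult:
  "anticomm m (x \<cdot> y) (z \<cdot> w) = z \<cdot> ((x \<cdot> y) \<cdot> w) + x \<cdot> ((z \<cdot> w) \<cdot> y)"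
  unfolding anticomm_def by (simp add: left_commutative [of "x \<cdot> y"] left_commutative [of "z \<cdot> w"])

lemma mult_anticomm_diff:
  "x \<cdot> anticomm m q y - y \<cdot> anticomm m q x = q \<cdot> comm m x y"
  unfolding anticomm_def comm_def
  by (simp add: add_right diff_right left_commutative [of x q] left_commutative [of y q]
      left_commutative [of x y])

lemma anticomm_comm_comm:
  "anticomm m (comm m c a) (comm m b d) =
     anticomm m (d \<cdot> c) (a \<cdot> b) + anticomm m (c \<cdot> d) (b \<cdot> a)
     - anticomm m (b \<cdot> c) (a \<cdot> d) - anticomm m (c \<cdot> b) (d \<cdot> a)"
proof -
  define p q where "p = comm m c a" and "q = comm m b d"
  have "anticomm m (d \<cdot> c) (a \<cdot> b) + anticomm m (c \<cdot> d) (b \<cdot> a)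
        - anticomm m (b \<cdot> c) (a \<cdot> d) - anticomm m (c \<cdot> b) (d \<cdot> a)
      = a \<cdot> ((d \<cdot> c) \<cdot> b - (b \<cdot> c) \<cdot> d) + b \<cdot> ((c \<cdot> d) \<cdot> a - (a \<cdot> d) \<cdot> c)
        + c \<cdot> ((b \<cdot> a) \<cdot> d - (d \<cdot> a) \<cdot> b) + d \<cdot> ((a \<cdot> b) \<cdot> c - (c \<cdot> b) \<cdot> a)"
    by (simp add: anticomm_mult_mult diff_right algebra_simps)
  also have "\<dots> = a \<cdot> anticomm m (comm m d b) c + b \<cdot> anticomm m (comm m c a) d
        + c \<cdot> anticomm m (comm m b d) a + d \<cdot> anticomm m (comm m a c) b"
    by (simp add: anticomm_comm_left)
  also have "\<dots> = (c \<cdot> anticomm m q a - a \<cdot> anticomm m q c) + (b \<cdot> anticomm m p d - d \<cdot> anticomm m p b)"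
    by (simp add: p_def q_def comm_swap [of m b d] comm_swap [of m a c] anticomm_minus_left
        minus_right)
  also have "\<dots> = anticomm m p q"
    unfolding mult_anticomm_diff p_def [symmetric] q_def [symmetric]
    by (simp add: anticomm_def add.commute)
  finally show ?thesis
    by (simp add: p_def q_def)
qed

end

lemma novikov_algebra_imp_novikov: "novikov_algebra scale m \<Longrightarrow> novikov m"
  unfolding novikov_algebra_def bilinear_product_def by unfold_locales blast+

theorem mainTheorem12:
  fixes scale :: "'k::field \<Rightarrow> 'a::ab_group_add \<Rightarrow> 'a"
    and m :: "'a \<Rightarrow> 'a \<Rightarrow> 'a"
  assumes "novikov_algebra scale m"
  shows "\<forall>a b c d.
    anticomm m (comm m c a) (comm m b d) =
      anticomm m (m d c) (m a b) + anticomm m (m c d) (m b a)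
      - anticomm m (m b c) (m a d) - anticomm m (m c b) (m d a)"
  using novikov.anticomm_comm_comm [OF novikov_algebra_imp_novikov [OF assms]] by blast

end
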